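(* Let $\kappa\geq 1$ be a cardinal and let $(S,\mu)$ be a multisemigroup with multiplicities bounded by $\kappa$. Let $S^\diamond$ be the set of all words in the alphabet $S$ of length at least two, and let $\overline{\mu}:S^\diamond\to \mathcal{B}_\kappa(S)$ be defined recursively by $\overline{\mu}_{st}=\mu_{s,t}$ for $s,t\in S$, and, for $w=sx$ with $s\in S$ and $x$ a word of length at least two, $$\overline{\mu}_w(t)=\sum_{a\in S}\overline{\mu}_x(a)\,\mu_{s,a}(t)\qquad (t\in S).$$ Then, for every $w\in S^\diamond$ of the form $w=xs$, where $s\in S$ and $x$ is a word of length at least two, we have $$\overline{\mu}_w(t)=\sum_{a\in S}\overline{\mu}_x(a)\,\mu_{a,s}(t)\qquad\text{for all } t\in S.$$
   Context: For a cardinal $\kappa\geq 1$, $\mathrm{Card}_\kappa$ denotes the set of all cardinals not greater than $\kappa$, made into a complete semiring: the sum of any family of elements is the cardinal sum (disjoint union) and the product is the cardinal product (Cartesian product), in both cases with the convention that any cardinal greater than $\kappa$ is identified with $\kappa$. For a set $X$, $\mathcal{B}_\kappa(X)$ is the set of all functions $X\to\mathrm{Card}_\kappa$ (with pointwise operations). For a cardinal $\lambda\le\kappa$ and a function $\nu:S\to\mathrm{Card}_\kappa$, $\lambda\nu$ denotes the sum of $\lambda$ copies of $\nu$ (computed pointwise in $\mathrm{Card}_\kappa$). A multisemigroup with multiplicities bounded by $\kappa$ is a pair $(S,\mu)$ where $S$ is a non-empty set and $\mu:S\times S\to\mathcal{B}_\kappa(S)$, $(s,t)\mapsto\mu_{s,t}$,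 satisfies, for all $r,s,t\in S$, the equality of functions $S\to\mathrm{Card}_\kappa$ $$\sum_{i\in S}\mu_{s,t}(i)\,\mu_{r,i}=\sum_{j\in S}\mu_{r,s}(j)\,\mu_{j,t}.$$ *)

theory Defs
  imports Main
begin

text \<open>Card_kappa is modelled by the subsets of the type 'k (so kappa = |UNIV :: 'k set| >= 1,
  as types are nonempty); a subset A represents the cardinal |A|, and two elements of
  Card_kappa are equal iff their representatives are equipotent (=o).\<close>

text \<open>Truncation: a representative in 'k of min(|A|, kappa).\<close>
definition ctrunc :: "'a set \<Rightarrow> 'k set" where
  "ctrunc A = (SOME B :: 'k set.
      if ordLeq2 (card_of A) (card_of (UNIV :: 'k set)) then ordIso2 (card_of B) (card_of A) else B = UNIV)"

definition ksum :: "('i \<Rightarrow> 'k set) \<Rightarrow> 'i set \<Rightarrow> 'k set" where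
  "ksum f I = ctrunc (SIGMA i:I. f i)"

definition kprod :: "'k set \<Rightarrow> 'k set \<Rightarrow> 'k set" where
  "kprod A B = ctrunc (A \<times> B)"

text \<open>mu s t u is (a representative of) mu_{s,t}(u); S is the type 's.
  The axiom: sum_i mu_{s,t}(i) mu_{r,i} = sum_j mu_{r,s}(j) mu_{j,t}, evaluated at every u.\<close>
definition multisemigroup :: "('s \<Rightarrow> 's \<Rightarrow> 's \<Rightarrow> 'k set) \<Rightarrow> bool" where
  "multisemigroup mu \<longleftrightarrow>
     (\<forall>r s t u. ordIso2 (card_of (ksum (\<lambda>i. kprod (mu s t i) (mu r i u)) UNIV))
                 (card_of (ksum (\<lambda>j. kprod (mu r s j) (mu j t u)) UNIV)))"

text \<open>mubar on words of length >= 2 (value on shorter words is irrelevant).\<close>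
fun mubar :: "('s \<Rightarrow> 's \<Rightarrow> 's \<Rightarrow> 'k set) \<Rightarrow> 's list \<Rightarrow> 's \<Rightarrow> 'k set" where
  "mubar mu [] u = {}"
| "mubar mu [s] u = {}"
| "mubar mu [s, t] u = mu s t u"
| "mubar mu (s # t # r # x) u = ksum (\<lambda>a. kprod (mubar mu (t # r # x) a) (mu s a u)) UNIV"

end

theory Submission
  imports Defs
begin

text \<open>Both sides are computed in \<open>Card\<^sub>\<kappa>\<close>, where truncation at \<open>\<kappa>\<close> happens at every step.
  We therefore compare sets up to the relation ``equipotent, or both of size at least \<open>\<kappa>\<close>'',
  which is a congruence for disjoint unions and Cartesian products and is unchanged by
  truncation. Modulo this relation every iterated product \<open>\<mu>\<close> becomes an honest
  \<open>\<Sigma>\<close>-set of tuples, and the identity follows by induction on the word: peel off the first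
  letter, use the induction hypothesis, reassociate the tuples, apply the multisemigroup axiom
  in each fibre, and reassociate back.\<close>

unbundle cardinal_syntax

text \<open>\<open>A\<close> and \<open>B\<close> represent the same element of \<open>Card\<^sub>\<kappa>\<close>, where \<open>\<kappa> = |UNIV :: 'k set|\<close>.\<close>
definition card_eq_upto :: "'k itself \<Rightarrow> 'a set \<Rightarrow> 'b set \<Rightarrow> bool" where
  "card_eq_upto K A B \<longleftrightarrow>
     |A| =o |B| \<or> ( |UNIV :: 'k set| \<le>o |A| \<and> |UNIV :: 'k set| \<le>o |B| )"

lemma card_eq_upto_if_ordIso: "|A| =o |B| \<Longrightarrow> card_eq_upto K A B"
  unfolding card_eq_upto_def by blast

lemma card_eq_upto_refl: "card_eq_upto K A A"
  by (rule card_eq_upto_if_ordIso[OF card_of_refl])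

lemma card_eq_upto_sym: "card_eq_upto K A B \<Longrightarrow> card_eq_upto K B A"
  unfolding card_eq_upto_def using ordIso_symmetric by blast

lemma card_eq_upto_trans [trans]:
  "card_eq_upto K A B \<Longrightarrow> card_eq_upto K B C \<Longrightarrow> card_eq_upto K A C"
  unfolding card_eq_upto_def
  by (meson ordIso_transitive ordLeq_ordIso_trans ordIso_symmetric)

lemma ordIso_if_card_eq_upto:
  assumes "card_eq_upto TYPE('k) (A :: 'k set) (B :: 'k set)"
  shows "|A| =o |B|"
proof -
  have "|A| \<le>o |UNIV :: 'k set|" "|B| \<le>o |UNIV :: 'k set|"
    by (simp_all add: card_of_mono1)
  with assms show ?thesis
    unfolding card_eq_upto_def by (meson ordIso_iff_ordLeq ordIso_transitive ordIso_symmetric)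
qed

lemma card_eq_upto_ctrunc: "card_eq_upto TYPE('k) (ctrunc A :: 'k set) A"
proof (cases "|A| \<le>o |UNIV :: 'k set|")
  case True
  then obtain f :: "_ \<Rightarrow> 'k" where "inj_on f A"
    unfolding card_of_ordLeq[symmetric] by (elim exE conjE)
  then have "|f ` A| =o |A|"
    by (rule ordIso_symmetric[OF card_of_ordIsoI[OF inj_on_imp_bij_betw]])
  then have "\<exists>B :: 'k set. |B| =o |A|" ..
  with True have "|ctrunc A :: 'k set| =o |A|"
    unfolding ctrunc_def by (simp only: if_True) (rule someI_ex)
  then show ?thesis by (rule card_eq_upto_if_ordIso)
next
  case False
  then have "ctrunc A = (UNIV :: 'k set)"
    unfolding ctrunc_def by simp
  moreover from False have "|UNIV :: 'k set| \<le>o |A|"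
    using ordLeq_total[OF card_of_Well_order card_of_Well_order] by blast
  moreover have "|UNIV :: 'k set| \<le>o |UNIV :: 'k set|"
    using card_of_refl ordIso_iff_ordLeq by blast
  ultimately show ?thesis
    unfolding card_eq_upto_def by simp
qed

lemma card_eq_upto_Sigma:
  fixes K :: "'k itself"
  assumes "\<And>i. i \<in> I \<Longrightarrow> card_eq_upto K (A i) (B i)"
  shows "card_eq_upto K (Sigma I A) (Sigma I B)"
proof (cases "\<forall>i\<in>I. |A i| =o |B i|")
  case True
  then show ?thesis by (intro card_eq_upto_if_ordIso card_of_Sigma_cong1)
next
  case False
  then obtain i where i: "i \<in> I" "|UNIV :: 'k set| \<le>o |A i|" "|UNIV :: 'k set| \<le>o |B i|"
    using assms unfolding card_eq_upto_def by blast
  have "|A i| \<le>o |Sigma I A|"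
    by (rule card_of_ordLeqI[of "Pair i"]) (simp_all add: i inj_on_def)
  moreover have "|B i| \<le>o |Sigma I B|"
    by (rule card_of_ordLeqI[of "Pair i"]) (simp_all add: i inj_on_def)
  ultimately show ?thesis
    using i unfolding card_eq_upto_def by (blast intro: ordLeq_transitive)
qed

lemma card_eq_upto_Times1:
  fixes K :: "'k itself"
  assumes "card_eq_upto K A A'"
  shows "card_eq_upto K (A \<times> B) (A' \<times> B)"
proof (cases "|A| =o |A'|")
  case True
  then show ?thesis
    by (intro card_eq_upto_if_ordIso) (simp add: ordIso_iff_ordLeq card_of_Times_mono1)
next
  case False
  with assms have big: "|UNIV :: 'k set| \<le>o |A|" "|UNIV :: 'k set| \<le>o |A'|"
    unfolding card_eq_upto_def by blast+
  show ?thesis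
  proof (cases "B = {}")
    case True
    then show ?thesis by (simp add: card_eq_upto_if_ordIso card_of_empty_ordIso)
  next
    case False
    with big show ?thesis
      unfolding card_eq_upto_def by (blast intro: ordLeq_transitive card_of_Times1)
  qed
qed

lemma card_eq_upto_Times:
  assumes "card_eq_upto K A A'" and "card_eq_upto K B B'"
  shows "card_eq_upto K (A \<times> B) (A' \<times> B')"
proof -
  have "card_eq_upto K (A \<times> B) (A' \<times> B)"
    using assms(1) by (rule card_eq_upto_Times1)
  also have "card_eq_upto K \<dots> (B \<times> A')"
    by (rule card_eq_upto_if_ordIso[OF card_of_Times_commute])
  also have "card_eq_upto K \<dots> (B' \<times> A')"
    using assms(2) by (rule card_eq_upto_Times1)
  also have "card_eq_upto K \<dots> (A' \<times> B')"
    by (rule card_eq_upto_if_ordIso[OF card_of_Times_commute])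
  finally show ?thesis .
qed

lemma card_eq_upto_ksum_kprod:
  "card_eq_upto TYPE('k) (ksum (\<lambda>i. kprod (A i) (B i)) I :: 'k set) (SIGMA i:I. A i \<times> B i)"
proof -
  have "card_eq_upto TYPE('k) (ksum (\<lambda>i. kprod (A i) (B i)) I :: 'k set)
          (SIGMA i:I. (kprod (A i) (B i) :: 'k set))"
    unfolding ksum_def by (rule card_eq_upto_ctrunc)
  also have "card_eq_upto TYPE('k) \<dots> (SIGMA i:I. A i \<times> B i)"
    by (rule card_eq_upto_Sigma) (simp add: kprod_def card_eq_upto_ctrunc)
  finally show ?thesis .
qed

lemma card_of_Sigma_Times_assoc:
  "|SIGMA e:I. (SIGMA d:J. Y d \<times> M d e) \<times> N e| =o |SIGMA d:J. Y d \<times> (SIGMA e:I. M d e \<times> N e)|"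
proof (rule card_of_ordIsoI)
  show "bij_betw (\<lambda>(e, (d, y, m), n). (d, y, e, m, n))
          (SIGMA e:I. (SIGMA d:J. Y d \<times> M d e) \<times> N e) (SIGMA d:J. Y d \<times> (SIGMA e:I. M d e \<times> N e))"
    by (rule bij_betw_byWitness[where f' = "\<lambda>(d, y, e, m, n). (e, (d, y, m), n)"]) auto
qed

lemma multisemigroup_Sigma_assoc:
  fixes mu :: "'s \<Rightarrow> 's \<Rightarrow> 's \<Rightarrow> 'k set"
  assumes "multisemigroup mu"
  shows "card_eq_upto TYPE('k) (SIGMA i:UNIV. mu s t i \<times> mu r i u) (SIGMA j:UNIV. mu r s j \<times> mu j t u)"
proof -
  have "card_eq_upto TYPE('k) (SIGMA i:UNIV. mu s t i \<times> mu r i u)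
          (ksum (\<lambda>i. kprod (mu s t i) (mu r i u)) UNIV :: 'k set)"
    by (rule card_eq_upto_sym[OF card_eq_upto_ksum_kprod])
  also have "card_eq_upto TYPE('k) \<dots> (ksum (\<lambda>j. kprod (mu r s j) (mu j t u)) UNIV :: 'k set)"
    using assms unfolding multisemigroup_def by (blast intro: card_eq_upto_if_ordIso)
  also have "card_eq_upto TYPE('k) \<dots> (SIGMA j:UNIV. mu r s j \<times> mu j t u)"
    by (rule card_eq_upto_ksum_kprod)
  finally show ?thesis .
qed

lemma mubar_Cons_card_eq_upto:
  fixes mu :: "'s \<Rightarrow> 's \<Rightarrow> 's \<Rightarrow> 'k set"
  assumes "length x \<ge> 2"
  shows "card_eq_upto TYPE('k) (mubar mu (s # x) u) (SIGMA a:UNIV. mubar mu x a \<times> mu s a u)"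
proof -
  obtain t r y where "x = t # r # y"
    using assms by (metis One_nat_def Suc_1 Suc_le_length_iff)
  then show ?thesis by (simp add: card_eq_upto_ksum_kprod)
qed

lemma mubar_snoc_card_eq_upto:
  fixes mu :: "'s \<Rightarrow> 's \<Rightarrow> 's \<Rightarrow> 'k set"
  assumes mu: "multisemigroup mu" and "length x \<ge> 2"
  shows "card_eq_upto TYPE('k) (mubar mu (x @ [s]) t) (SIGMA a:UNIV. mubar mu x a \<times> mu a s t)"
  using assms(2)
proof (induction x arbitrary: s t)
  case Nil
  then show ?case by simp
next
  case (Cons r y)
  then obtain q z where y: "y = q # z" by (cases y) auto
  show ?case
  proof (cases "z = []")
    case True
    have "card_eq_upto TYPE('k) (mubar mu ((r # y) @ [s]) t) (SIGMA e:UNIV. mu q s e \<times> mu r e t)"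
      using y True by (simp add: card_eq_upto_ksum_kprod)
    also have "card_eq_upto TYPE('k) \<dots> (SIGMA d:UNIV. mu r q d \<times> mu d s t)"
      by (rule multisemigroup_Sigma_assoc[OF mu])
    finally show ?thesis
      using y True by simp
  next
    case False
    then have y2: "length y \<ge> 2" by (simp add: y Suc_le_eq)
    have "card_eq_upto TYPE('k) (mubar mu ((r # y) @ [s]) t)
            (SIGMA e:UNIV. mubar mu (y @ [s]) e \<times> mu r e t)"
      using y2 by (simp add: mubar_Cons_card_eq_upto)
    also have "card_eq_upto TYPE('k) \<dots>
        (SIGMA e:UNIV. (SIGMA d:UNIV. mubar mu y d \<times> mu d s e) \<times> mu r e t)"
      by (intro card_eq_upto_Sigma card_eq_upto_Times Cons.IH[OF y2] card_eq_upto_refl)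
    also have "card_eq_upto TYPE('k) \<dots>
        (SIGMA d:UNIV. mubar mu y d \<times> (SIGMA e:UNIV. mu d s e \<times> mu r e t))"
      by (rule card_eq_upto_if_ordIso[OF card_of_Sigma_Times_assoc])
    also have "card_eq_upto TYPE('k) \<dots>
        (SIGMA d:UNIV. mubar mu y d \<times> (SIGMA e:UNIV. mu r d e \<times> mu e s t))"
      by (intro card_eq_upto_Sigma card_eq_upto_Times card_eq_upto_refl
          multisemigroup_Sigma_assoc[OF mu])
    also have "card_eq_upto TYPE('k) \<dots>
        (SIGMA e:UNIV. (SIGMA d:UNIV. mubar mu y d \<times> mu r d e) \<times> mu e s t)"
      by (rule card_eq_upto_if_ordIso[OF ordIso_symmetric[OF card_of_Sigma_Times_assoc]])
    also have "card_eq_upto TYPE('k) \<dots> (SIGMA e:UNIV. mubar mu (r # y) e \<times> mu e s t)"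
      using y2
      by (intro card_eq_upto_Sigma card_eq_upto_Times card_eq_upto_refl
          card_eq_upto_sym[OF mubar_Cons_card_eq_upto])
    finally show ?thesis .
  qed
qed

theorem proposition5:
  fixes mu :: "'s \<Rightarrow> 's \<Rightarrow> 's \<Rightarrow> 'k set"
  assumes "multisemigroup mu"
  shows "\<forall>x s t. length x \<ge> 2 \<longrightarrow>
           ordIso2 (card_of (mubar mu (x @ [s]) t))
                   (card_of (ksum (\<lambda>a. kprod (mubar mu x a) (mu a s t)) UNIV))"
proof (intro allI impI)
  fix x :: "'s list" and s t
  assume "length x \<ge> 2"
  then have "card_eq_upto TYPE('k) (mubar mu (x @ [s]) t) (SIGMA a:UNIV. mubar mu x a \<times> mu a s t)"
    by (rule mubar_snoc_card_eq_upto[OF assms])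
  also have "card_eq_upto TYPE('k) \<dots> (ksum (\<lambda>a. kprod (mubar mu x a) (mu a s t)) UNIV :: 'k set)"
    by (rule card_eq_upto_sym[OF card_eq_upto_ksum_kprod])
  finally show "|mubar mu (x @ [s]) t| =o |ksum (\<lambda>a. kprod (mubar mu x a) (mu a s t)) UNIV|"
    by (rule ordIso_if_card_eq_upto)
qed

end
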